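(* Let $S$ be a simple $(l,r)$-framed algebra and $C_S=\{\alpha\in\mathbb{Z}_2^{l+r}:S_{(0,\alpha)}\neq0\}$. Then $\dim S_{(0,\alpha)}=1$ for every $\alpha\in C_S$.
   Context: Let $\mathrm{IS}=\{0,\frac12,\frac1{16}\}$ with fusion rule $\star$ (values are subsets): $0\star h=h\star0=\{h\}$, $\frac12\star\frac12=\{0\}$, $\frac12\star\frac1{16}=\frac1{16}\star\frac12=\{\frac1{16}\}$, $\frac1{16}\star\frac1{16}=\{0,\frac12\}$; $A(h_0,h_1,h_2,h_3)=\{h: h\in h_2\star h_3,\ h_0\in h_1\star h\}$. For $h\in A(h_0,h_1,h_2,h_3)$, $h'\in A(h_0,h_2,h_1,h_3)$ define $B^{h,h'}_{h_0,h_1,h_2,h_3}$: $B_{*,0,*,*}=B_{*,*,0,*}=1$; $B_{*,\frac12,\frac12,*}=-1$; $B_{a,\frac12,\frac1{16},a'}=B_{a,\frac1{16},\frac12,a'}=i$ if $a$ or $a'$ is $\frac12$, else $-i$; $B^{b,b'}_{a,\frac1{16},\frac1{16},a'}=e^{-\pi i/8}\cdot\{1$ if $a,a'\ne\frac1{16},a=a'$; $i$ if $a,a'\neq\frac1{16},a\ne a'$; $\frac{1+i}2$ if $a=a'=\frac1{16},b=b'$; $\frac{1-i}2$ if $a=a'=\frac1{16},b\neq b'\}$. $\mathrm{IS}^{(l,r)}=\mathrm{IS}^l\times\mathrm{IS}^r$, $\lambda=(h_1,..,h_l,\bar h_1,..,\bar h_r)$, $s(\lambda)=\sum h_i-\sum\bar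 h_j$; $\star$, $A$ componentwise; $B^{\lambda,\lambda'}_{\lambda^0,\dots,\lambda^3}=\prod_{i\le l}B^{h_i,h'_i}_{h^0_i,\dots,h^3_i}\prod_{j\le r}\overline{B^{\bar h_j,\bar h'_j}_{\bar h^0_j,\dots,\bar h^3_j}}$. An $(l,r)$-framed algebra: finite-dimensional $\mathrm{IS}^{(l,r)}$-graded $S=\bigoplus S_\lambda$ over $\mathbb{C}$ with bilinear product, nonzero $1\in S_0$, $a\cdot_\lambda b$ the $S_\lambda$-component of $a\cdot b$, satisfying (FA1) $S_\lambda=0$ unless $s(\lambda)\in\mathbb{Z}$; (FA2) $S_0=\mathbb{C}1$, $1$ a two-sided unit; (FA3) $S_{\lambda^1}\cdot S_{\lambda^2}\subset\bigoplus_{\lambda\in\lambda^1\star\lambda^2}S_\lambda$; (FA4) $a_2\cdot_{\lambda^0}(a_1\cdot_{\lambda'}a_3)=\sum_{\lambda\in A(\lambda^0,\lambda^1,\lambda^2,\lambda^3)}B^{\lambda,\lambda'}_{\lambda^0,\lambda^1,\lambda^2,\lambda^3}a_1\cdot_{\lambda^0}(a_2\cdot_\lambda a_3)$ for $a_i\in S_{\lambda^i}$, $\lambda'\in A(\lambda^0,\lambda^2,\lambda^1,\lambda^3)$. Ideal: graded subspace $M$ with $S\cdot M\subset M$; simple: only ideals $0$ and $S$. Identify $\mathrm{IS}$ with $\{(d,c)\in\mathbb{Z}_2^2:dc=0\}$ via $0\leftrightarrow(0,0)$, $\frac12\leftrightarrow(0,1)$, $\frac1{16}\leftrightarrow(1,0)$,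 and componentwise $\mathrm{IS}^{(l,r)}$ with pairs $(d,c)\in(\mathbb{Z}_2^{l+r})^2$, $dc=0$. *)

theory Defs
  imports Complex_Main
begin

datatype IS = H0 | Hhalf | H16

fun ISval :: "IS \<Rightarrow> real" where
  "ISval H0 = 0" | "ISval Hhalf = 1/2" | "ISval H16 = 1/16"

fun fus :: "IS \<Rightarrow> IS \<Rightarrow> IS set" where
  "fus H0 h = {h}"
| "fus h H0 = {h}"
| "fus Hhalf Hhalf = {H0}"
| "fus Hhalf H16 = {H16}"
| "fus H16 Hhalf = {H16}"
| "fus H16 H16 = {H0, Hhalf}"

definition Aset :: "IS \<Rightarrow> IS \<Rightarrow> IS \<Rightarrow> IS \<Rightarrow> IS set" where
  "Aset h0 h1 h2 h3 = {h. h \<in> fus h2 h3 \<and> h0 \<in> fus h1 h}"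

text \<open>Bc h h' h0 h1 h2 h3 is the braiding coefficient B with upper indices h h'
  and lower indices h0 h1 h2 h3 (only meaningful for h in Aset h0 h1 h2 h3 and
  h' in Aset h0 h2 h1 h3; unspecified cases are set to 0).\<close>
definition Bc :: "IS \<Rightarrow> IS \<Rightarrow> IS \<Rightarrow> IS \<Rightarrow> IS \<Rightarrow> IS \<Rightarrow> complex" where
  "Bc b b' a h1 h2 a' =
    (if h1 = H0 \<or> h2 = H0 then 1
     else if h1 = Hhalf \<and> h2 = Hhalf then -1
     else if (h1 = Hhalf \<and> h2 = H16) \<or> (h1 = H16 \<and> h2 = Hhalf) then
       (if a = Hhalf \<or> a' = Hhalf then \<i> else - \<i>)
     else \<comment> \<open>h1 = h2 = 1/16\<close>
       cis (- pi / 8) *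
       (if a \<noteq> H16 \<and> a' \<noteq> H16 \<and> a = a' then 1
        else if a \<noteq> H16 \<and> a' \<noteq> H16 \<and> a \<noteq> a' then \<i>
        else if a = H16 \<and> a' = H16 \<and> b = b' then (1 + \<i>) / 2
        else if a = H16 \<and> a' = H16 \<and> b \<noteq> b' then (1 - \<i>) / 2
        else 0))"

text \<open>An element of IS^(l,r) is encoded as a function nat => IS which is H0
  outside {0..<l+r}; indices i < l are the chiral ones h_1..h_l, indices
  l <= i < l+r are the antichiral ones.\<close>
definition Lam :: "nat \<Rightarrow> nat \<Rightarrow> (nat \<Rightarrow> IS) set" where
  "Lam l r = {la. \<forall>i\<ge>l+r. la i = H0}"

definition lam0 :: "nat \<Rightarrow> IS" where "lam0 = (\<lambda>_. H0)"

definition sw :: "nat \<Rightarrow> nat \<Rightarrow> (nat \<Rightarrow> IS) \<Rightarrow> real" where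
  "sw l r la = (\<Sum>i<l. ISval (la i)) - (\<Sum>i\<in>{l..<l+r}. ISval (la i))"

definition fusL :: "nat \<Rightarrow> nat \<Rightarrow> (nat \<Rightarrow> IS) \<Rightarrow> (nat \<Rightarrow> IS) \<Rightarrow> (nat \<Rightarrow> IS) set" where
  "fusL l r la1 la2 = {la \<in> Lam l r. \<forall>i<l+r. la i \<in> fus (la1 i) (la2 i)}"

definition AL :: "nat \<Rightarrow> nat \<Rightarrow> (nat \<Rightarrow> IS) \<Rightarrow> (nat \<Rightarrow> IS) \<Rightarrow> (nat \<Rightarrow> IS) \<Rightarrow> (nat \<Rightarrow> IS)
                  \<Rightarrow> (nat \<Rightarrow> IS) set" where
  "AL l r la0 la1 la2 la3 = {la \<in> Lam l r. \<forall>i<l+r. la i \<in> Aset (la0 i) (la1 i) (la2 i) (la3 i)}"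

definition BL :: "nat \<Rightarrow> nat \<Rightarrow> (nat \<Rightarrow> IS) \<Rightarrow> (nat \<Rightarrow> IS) \<Rightarrow> (nat \<Rightarrow> IS) \<Rightarrow> (nat \<Rightarrow> IS)
                  \<Rightarrow> (nat \<Rightarrow> IS) \<Rightarrow> (nat \<Rightarrow> IS) \<Rightarrow> complex" where
  "BL l r la la' la0 la1 la2 la3 =
     (\<Prod>i<l. Bc (la i) (la' i) (la0 i) (la1 i) (la2 i) (la3 i)) *
     (\<Prod>i\<in>{l..<l+r}. cnj (Bc (la i) (la' i) (la0 i) (la1 i) (la2 i) (la3 i)))"

text \<open>The algebra S is the whole carrier type 'v, a complex vector space with
  scalar multiplication sc; Sc la is the homogeneous subspace S_la.\<close>
definition graded :: "(complex \<Rightarrow> 'v::ab_group_add \<Rightarrow> 'v) \<Rightarrow> nat \<Rightarrow> nat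
                      \<Rightarrow> ((nat \<Rightarrow> IS) \<Rightarrow> 'v set) \<Rightarrow> bool" where
  "graded sc l r Sc \<longleftrightarrow>
     (\<forall>la. module.subspace sc (Sc la)) \<and>
     (\<forall>la. la \<notin> Lam l r \<longrightarrow> Sc la = {0}) \<and>
     (\<forall>x. \<exists>!f. (\<forall>la\<in>Lam l r. f la \<in> Sc la) \<and> (\<forall>la. la \<notin> Lam l r \<longrightarrow> f la = 0)
               \<and> x = sum f (Lam l r))"

definition comp :: "nat \<Rightarrow> nat \<Rightarrow> ((nat \<Rightarrow> IS) \<Rightarrow> 'v::ab_group_add set) \<Rightarrow> (nat \<Rightarrow> IS)
                    \<Rightarrow> 'v \<Rightarrow> 'v" where
  "comp l r Sc la x = (THE f. (\<forall>\<mu>\<in>Lam l r. f \<mu> \<in> Sc \<mu>) \<and> (\<forall>\<mu>. \<mu> \<notin> Lam l r \<longrightarrow> f \<mu> = 0)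
                               \<and> x = sum f (Lam l r)) la"

definition framed_algebra ::
  "nat \<Rightarrow> nat \<Rightarrow> (complex \<Rightarrow> 'v::ab_group_add \<Rightarrow> 'v) \<Rightarrow> ((nat \<Rightarrow> IS) \<Rightarrow> 'v set)
   \<Rightarrow> ('v \<Rightarrow> 'v \<Rightarrow> 'v) \<Rightarrow> 'v \<Rightarrow> bool" where
  "framed_algebra l r sc Sc mult one \<longleftrightarrow>
     vector_space sc \<and>
     (\<exists>B. finite B \<and> module.span sc B = UNIV) \<and>
     graded sc l r Sc \<and>
     (\<forall>a. Vector_Spaces.linear sc sc (mult a)) \<and>
     (\<forall>b. Vector_Spaces.linear sc sc (\<lambda>a. mult a b)) \<and>
     one \<noteq> 0 \<and> one \<in> Sc lam0 \<and>
     \<comment> \<open>FA1\<close>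
     (\<forall>la\<in>Lam l r. sw l r la \<notin> \<int> \<longrightarrow> Sc la = {0}) \<and>
     \<comment> \<open>FA2\<close>
     Sc lam0 = module.span sc {one} \<and>
     (\<forall>a. mult one a = a \<and> mult a one = a) \<and>
     \<comment> \<open>FA3\<close>
     (\<forall>la1\<in>Lam l r. \<forall>la2\<in>Lam l r. \<forall>a\<in>Sc la1. \<forall>b\<in>Sc la2. \<forall>la\<in>Lam l r.
        la \<notin> fusL l r la1 la2 \<longrightarrow> comp l r Sc la (mult a b) = 0) \<and>
     \<comment> \<open>FA4\<close>
     (\<forall>la0\<in>Lam l r. \<forall>la1\<in>Lam l r. \<forall>la2\<in>Lam l r. \<forall>la3\<in>Lam l r.
      \<forall>a1\<in>Sc la1. \<forall>a2\<in>Sc la2. \<forall>a3\<in>Sc la3. \<forall>la'\<in>AL l r la0 la2 la1 la3.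
        comp l r Sc la0 (mult a2 (comp l r Sc la' (mult a1 a3))) =
        (\<Sum>la\<in>AL l r la0 la1 la2 la3.
           sc (BL l r la la' la0 la1 la2 la3) (comp l r Sc la0 (mult a1 (comp l r Sc la (mult a2 a3))))))"

definition graded_subspace ::
  "nat \<Rightarrow> nat \<Rightarrow> (complex \<Rightarrow> 'v::ab_group_add \<Rightarrow> 'v) \<Rightarrow> ((nat \<Rightarrow> IS) \<Rightarrow> 'v set) \<Rightarrow> 'v set \<Rightarrow> bool" where
  "graded_subspace l r sc Sc M \<longleftrightarrow>
     module.subspace sc M \<and> (\<forall>x\<in>M. \<forall>la. comp l r Sc la x \<in> M)"

definition fa_ideal ::
  "nat \<Rightarrow> nat \<Rightarrow> (complex \<Rightarrow> 'v::ab_group_add \<Rightarrow> 'v) \<Rightarrow> ((nat \<Rightarrow> IS) \<Rightarrow> 'v set)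
   \<Rightarrow> ('v \<Rightarrow> 'v \<Rightarrow> 'v) \<Rightarrow> 'v set \<Rightarrow> bool" where
  "fa_ideal l r sc Sc mult M \<longleftrightarrow>
     graded_subspace l r sc Sc M \<and> (\<forall>a. \<forall>x\<in>M. mult a x \<in> M)"

definition simple_framed_algebra ::
  "nat \<Rightarrow> nat \<Rightarrow> (complex \<Rightarrow> 'v::ab_group_add \<Rightarrow> 'v) \<Rightarrow> ((nat \<Rightarrow> IS) \<Rightarrow> 'v set)
   \<Rightarrow> ('v \<Rightarrow> 'v \<Rightarrow> 'v) \<Rightarrow> 'v \<Rightarrow> bool" where
  "simple_framed_algebra l r sc Sc mult one \<longleftrightarrow>
     framed_algebra l r sc Sc mult one \<and>
     (\<forall>M. fa_ideal l r sc Sc mult M \<longrightarrow> M = {0} \<or> M = UNIV)"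

text \<open>Elements of Z_2^(l+r) are encoded as bool-valued functions vanishing
  (False) outside {0..<l+r}; (0,\<alpha>) is the index with d = 0 and c = \<alpha>, i.e.
  entry 1/2 where \<alpha> is True and 0 elsewhere.\<close>
definition Z2vec :: "nat \<Rightarrow> (nat \<Rightarrow> bool) set" where
  "Z2vec n = {\<alpha>. \<forall>i\<ge>n. \<not> \<alpha> i}"

definition zero_c :: "(nat \<Rightarrow> bool) \<Rightarrow> nat \<Rightarrow> IS" where
  "zero_c \<alpha> = (\<lambda>i. if \<alpha> i then Hhalf else H0)"

definition code_CS :: "nat \<Rightarrow> nat \<Rightarrow> ((nat \<Rightarrow> IS) \<Rightarrow> 'v::zero set) \<Rightarrow> (nat \<Rightarrow> bool) set" where
  "code_CS l r Sc = {\<alpha> \<in> Z2vec (l + r). Sc (zero_c \<alpha>) \<noteq> {0}}"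

end

theory Submission imports Defs begin

text \<open>The S_0-component of a product, (s, x) \<mapsto> (s x)_0, is a pairing with values in
  S_0 = \<complex>1. By FA4 with a_3 = 1 it is symmetric up to scalars, and by FA3 it pairs S_\<lambda>
  only with S_\<lambda>. Its radical is a graded ideal (FA4 moves a left factor across the pairing)
  not containing 1, so it vanishes in a simple algebra. If \<lambda> has no entry 1/16, then
  \<lambda> \<star> \<lambda> = {0}; choosing a, s \<in> S_\<lambda> with (a s)_0 \<noteq> 0, FA4 applied to (b s)_0 a for any
  b \<in> S_\<lambda> gives (b s)_0 a = B (a s)_0 b with B \<noteq> 0, so S_\<lambda> = \<complex>a.\<close>

lemma finite_UNIV_IS: "finite (UNIV :: IS set)"
proof -
  have "UNIV = {H0, Hhalf, H16}" by (auto intro: IS.exhaust)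
  then show ?thesis by (metis finite.emptyI finite.insertI)
qed

lemma finite_Lam: "finite (Lam l r)"
proof -
  have "Lam l r = {f. \<forall>i. (i \<in> {..<l+r} \<longrightarrow> f i \<in> UNIV) \<and> (i \<notin> {..<l+r} \<longrightarrow> f i = H0)}"
    by (auto simp: Lam_def)
  then show ?thesis
    using finite_set_of_finite_funs[OF _ finite_UNIV_IS, of "{..<l+r}" H0] by simp
qed

lemma lam0_in_Lam: "lam0 \<in> Lam l r"
  by (simp add: Lam_def lam0_def)

lemma H0_in_fus_iff: "H0 \<in> fus h h' \<longleftrightarrow> h = h'"
  by (cases h; cases h') auto

lemma fus_H0_right: "fus h H0 = {h}"
  by (cases h) auto

lemma lam0_in_fusL_iff:
  assumes "la1 \<in> Lam l r" "la2 \<in> Lam l r"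
  shows "lam0 \<in> fusL l r la1 la2 \<longleftrightarrow> la1 = la2"
proof
  assume fused: "lam0 \<in> fusL l r la1 la2"
  show "la1 = la2"
  proof
    fix i show "la1 i = la2 i"
      using fused assms by (cases "i < l + r") (auto simp: fusL_def Lam_def lam0_def H0_in_fus_iff)
  qed
qed (use assms in \<open>auto simp: fusL_def Lam_def lam0_def H0_in_fus_iff\<close>)

lemma in_AL_iff:
  assumes "la0 \<in> Lam l r"
  shows "la \<in> AL l r la0 la1 la2 la3 \<longleftrightarrow> la \<in> fusL l r la2 la3 \<and> la0 \<in> fusL l r la1 la"
  using assms by (auto simp: AL_def fusL_def Aset_def)

lemma in_AL_unit_right:
  assumes "la0 \<in> Lam l r" "la1 \<in> Lam l r" "la0 \<in> fusL l r la2 la1"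
  shows "la1 \<in> AL l r la0 la2 la1 lam0"
  using assms by (auto simp: in_AL_iff fusL_def lam0_def fus_H0_right)

lemma AL_diagonal:
  assumes "la \<in> Lam l r" and no16: "\<forall>i. la i \<noteq> H16"
  shows "AL l r la la la la = {lam0}"
proof -
  have fus_diag: "h \<in> fus h' h' \<Longrightarrow> h = H0" if "h' \<noteq> H16" for h h'
    using that by (cases h') auto
  have "la' = lam0" if "la' \<in> fusL l r la la" for la'
  proof
    fix i show "la' i = lam0 i"
      using that fus_diag[OF no16[rule_format, of i]]
      by (cases "i < l + r") (auto simp: fusL_def Lam_def lam0_def)
  qed
  then show ?thesis
    using assms lam0_in_Lam[of l r]
    by (auto simp: in_AL_iff fusL_def lam0_def H0_in_fus_iff fus_H0_right)
qed

lemma BL_diagonal_nonzero: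
  assumes "\<forall>i. la i \<noteq> H16"
  shows "BL l r lam0 lam0 la la la la \<noteq> 0"
proof -
  have "Bc b b' h h h h \<noteq> 0" if "h \<noteq> H16" for b b' h
    using that by (cases h) (auto simp: Bc_def)
  then show ?thesis
    using assms unfolding BL_def by simp
qed

lemma zero_c_in_Lam: "\<alpha> \<in> Z2vec (l + r) \<Longrightarrow> zero_c \<alpha> \<in> Lam l r"
  by (simp add: Z2vec_def Lam_def zero_c_def)

lemma zero_c_neq_H16: "zero_c \<alpha> i \<noteq> H16"
  by (simp add: zero_c_def)

locale framed_alg =
  fixes l r :: nat and sc :: "complex \<Rightarrow> 'v::ab_group_add \<Rightarrow> 'v"
    and Sc :: "(nat \<Rightarrow> IS) \<Rightarrow> 'v set"
    and mult :: "'v \<Rightarrow> 'v \<Rightarrow> 'v" and one :: 'v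
  assumes framed_algebra: "framed_algebra l r sc Sc mult one"
begin

sublocale vector_space sc
  using framed_algebra by (simp add: framed_algebra_def)

lemma graded: "graded sc l r Sc"
  using framed_algebra by (simp add: framed_algebra_def)

lemma subspace_Sc: "subspace (Sc la)"
  using graded by (simp add: graded_def)

lemma Sc_notin_Lam: "la \<notin> Lam l r \<Longrightarrow> Sc la = {0}"
  using graded by (simp add: graded_def)

lemma linear_mult_left: "module_hom sc sc (mult a)"
  using framed_algebra by (simp add: framed_algebra_def linear_iff_module_hom)

lemma linear_mult_right: "module_hom sc sc (\<lambda>a. mult a b)"
  using framed_algebra by (simp add: framed_algebra_def linear_iff_module_hom)

lemma one_neq_0: "one \<noteq> 0"
  and one_in_Sc: "one \<in> Sc lam0"
  and Sc_lam0: "Sc lam0 = span {one}"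
  and mult_one_left: "mult one a = a"
  and mult_one_right: "mult a one = a"
  using framed_algebra unfolding framed_algebra_def by blast+

lemma fusion_rule:
  "la1 \<in> Lam l r \<Longrightarrow> la2 \<in> Lam l r \<Longrightarrow> a \<in> Sc la1 \<Longrightarrow> b \<in> Sc la2 \<Longrightarrow> la \<in> Lam l r \<Longrightarrow>
   la \<notin> fusL l r la1 la2 \<Longrightarrow> comp l r Sc la (mult a b) = 0"
  using framed_algebra unfolding framed_algebra_def by blast

lemma braiding:
  "la0 \<in> Lam l r \<Longrightarrow> la1 \<in> Lam l r \<Longrightarrow> la2 \<in> Lam l r \<Longrightarrow> la3 \<in> Lam l r \<Longrightarrow>
   a1 \<in> Sc la1 \<Longrightarrow> a2 \<in> Sc la2 \<Longrightarrow> a3 \<in> Sc la3 \<Longrightarrow> la' \<in> AL l r la0 la2 la1 la3 \<Longrightarrow>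
   comp l r Sc la0 (mult a2 (comp l r Sc la' (mult a1 a3))) =
   (\<Sum>la\<in>AL l r la0 la1 la2 la3.
      sc (BL l r la la' la0 la1 la2 la3) (comp l r Sc la0 (mult a1 (comp l r Sc la (mult a2 a3)))))"
  using framed_algebra unfolding framed_algebra_def by blast

lemmas mult_zero_right = module_hom.zero[OF linear_mult_left]
  and mult_add_right = module_hom.add[OF linear_mult_left]
  and mult_scale_right = module_hom.scale[OF linear_mult_left]
  and mult_sum_right = module_hom.sum[OF linear_mult_left]
  and mult_sum_left = module_hom.sum[OF linear_mult_right]

abbreviation decomposition :: "((nat \<Rightarrow> IS) \<Rightarrow> 'v) \<Rightarrow> 'v \<Rightarrow> bool" where
  "decomposition f x \<equiv> (\<forall>la\<in>Lam l r. f la \<in> Sc la) \<and> (\<forall>la. la \<notin> Lam l r \<longrightarrow> f la = 0)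
     \<and> x = sum f (Lam l r)"

lemma ex1_decomposition: "\<exists>!f. decomposition f x"
  using graded by (simp add: graded_def)

lemma decomposition_comp: "decomposition (\<lambda>la. comp l r Sc la x) x"
  unfolding comp_def using theI'[OF ex1_decomposition[of x]] by simp

lemma comp_unique: "decomposition f x \<Longrightarrow> comp l r Sc la x = f la"
  unfolding comp_def using the1_equality[OF ex1_decomposition[of x]] by simp

lemma comp_in_Sc: "comp l r Sc la x \<in> Sc la"
  using decomposition_comp[of x] Sc_notin_Lam[of la] by (cases "la \<in> Lam l r") auto

lemma sum_comp: "(\<Sum>la\<in>Lam l r. comp l r Sc la x) = x"
  using decomposition_comp[of x] by simp

lemma comp_homogeneous:
  assumes "y \<in> Sc mu"
  shows "comp l r Sc la y = (if la = mu then y else 0)"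
proof (cases "mu \<in> Lam l r")
  case True
  show ?thesis
    by (rule comp_unique)
      (use True assms subspace_0[OF subspace_Sc] finite_Lam in \<open>auto simp: if_distrib cong: if_cong\<close>)
next
  case False
  then have "y = 0" using assms Sc_notin_Lam by auto
  then have "decomposition (\<lambda>_. 0) y" using subspace_0[OF subspace_Sc] by auto
  then have "comp l r Sc la y = 0" by (rule comp_unique)
  then show ?thesis using \<open>y = 0\<close> by simp
qed

lemma linear_comp: "module_hom sc sc (comp l r Sc la)"
proof -
  have add: "decomposition (\<lambda>la. comp l r Sc la x + comp l r Sc la y) (x + y)" for x y
    using decomposition_comp[of x] decomposition_comp[of y] subspace_add[OF subspace_Sc]
    by (auto simp: sum.distrib)
  have scale: "decomposition (\<lambda>la. sc c (comp l r Sc la x)) (sc c x)" for c x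
  proof -
    have "sc c x = (\<Sum>la\<in>Lam l r. sc c (comp l r Sc la x))"
      by (metis sum_comp scale_sum_right)
    then show ?thesis using decomposition_comp[of x] subspace_scale[OF subspace_Sc] by auto
  qed
  show ?thesis
    using comp_unique[OF add] comp_unique[OF scale]
    by (simp add: module_hom_def module_hom_axioms_def module_axioms)
qed

lemmas comp_zero = module_hom.zero[OF linear_comp]
  and comp_add = module_hom.add[OF linear_comp]
  and comp_scale = module_hom.scale[OF linear_comp]

lemma comp_mult_commute:
  assumes "la0 \<in> Lam l r" "la1 \<in> Lam l r" "la2 \<in> Lam l r"
    and a1: "a1 \<in> Sc la1" and a2: "a2 \<in> Sc la2"
  shows "\<exists>c. comp l r Sc la0 (mult a2 a1) = sc c (comp l r Sc la0 (mult a1 a2))"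
proof (cases "la0 \<in> fusL l r la2 la1")
  case True
  let ?B = "\<lambda>la. BL l r la la1 la0 la1 la2 lam0" and ?x = "comp l r Sc la0 (mult a1 a2)"
  have "comp l r Sc la0 (mult a2 a1) = comp l r Sc la0 (mult a2 (comp l r Sc la1 (mult a1 one)))"
    by (simp add: comp_homogeneous[OF a1] mult_one_right)
  also have "\<dots> = (\<Sum>la\<in>AL l r la0 la1 la2 lam0.
                     sc (?B la) (comp l r Sc la0 (mult a1 (comp l r Sc la (mult a2 one)))))"
    by (rule braiding[OF assms(1-3) lam0_in_Lam a1 a2 one_in_Sc in_AL_unit_right[OF assms(1,2) True]])
  also have "\<dots> = (\<Sum>la\<in>AL l r la0 la1 la2 lam0. sc (if la = la2 then ?B la else 0) ?x)"
    by (intro sum.cong) (simp_all add: mult_one_right comp_homogeneous[OF a2] mult_zero_right comp_zero)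
  also have "\<dots> = sc (\<Sum>la\<in>AL l r la0 la1 la2 lam0. if la = la2 then ?B la else 0) ?x"
    by (rule scale_sum_left[symmetric])
  finally show ?thesis by blast
next
  case False
  then have "comp l r Sc la0 (mult a2 a1) = 0"
    using fusion_rule[OF assms(3,2) a2 a1 assms(1)] by simp
  then show ?thesis by auto
qed

lemma braiding_lhs_eq_0:
  assumes L: "la0 \<in> Lam l r" "la1 \<in> Lam l r" "la2 \<in> Lam l r" "la3 \<in> Lam l r" "la' \<in> Lam l r"
    and a: "a1 \<in> Sc la1" "a2 \<in> Sc la2" "a3 \<in> Sc la3"
    and rhs_eq_0: "\<forall>la\<in>AL l r la0 la1 la2 la3. comp l r Sc la0 (mult a1 (comp l r Sc la (mult a2 a3))) = 0"
  shows "comp l r Sc la0 (mult a2 (comp l r Sc la' (mult a1 a3))) = 0"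
proof (cases "la' \<in> AL l r la0 la2 la1 la3")
  case True
  then show ?thesis by (simp add: braiding[OF L(1-4) a True] rhs_eq_0)
next
  case False
  then consider "la' \<notin> fusL l r la1 la3" | "la0 \<notin> fusL l r la2 la'"
    using in_AL_iff[OF L(1)] by blast
  then show ?thesis
  proof cases
    case 1
    then show ?thesis by (simp add: fusion_rule[OF L(2,4) a(1,3) L(5)] mult_zero_right comp_zero)
  next
    case 2
    then show ?thesis by (rule fusion_rule[OF L(3,5) a(2) comp_in_Sc L(1)])
  qed
qed

definition radical :: "'v set" where
  "radical = {x. \<forall>mu\<in>Lam l r. \<forall>nu\<in>Lam l r. \<forall>s\<in>Sc nu.
                  comp l r Sc lam0 (mult s (comp l r Sc mu x)) = 0}"

lemma homogeneous_radical_mult: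
  assumes L: "nu \<in> Lam l r" "rho \<in> Lam l r" "mu \<in> Lam l r" "ka \<in> Lam l r"
    and x: "x \<in> Sc nu" and a: "a \<in> Sc rho" and s: "s \<in> Sc ka"
    and x_null: "\<And>ka' s'. ka' \<in> Lam l r \<Longrightarrow> s' \<in> Sc ka' \<Longrightarrow> comp l r Sc lam0 (mult s' x) = 0"
  shows "comp l r Sc lam0 (mult s (comp l r Sc mu (mult a x))) = 0"
proof -
  obtain c where c: "comp l r Sc mu (mult a x) = sc c (comp l r Sc mu (mult x a))"
    using comp_mult_commute[OF L(3,1,2) x a] by blast
  have "comp l r Sc lam0 (mult s (comp l r Sc mu (mult x a))) = 0"
  proof (rule braiding_lhs_eq_0[OF lam0_in_Lam L(1,4,2,3) x s a], intro ballI)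
    fix la assume "la \<in> AL l r lam0 nu ka rho"
    then have la: "la \<in> Lam l r" by (simp add: AL_def)
    obtain c' where "comp l r Sc lam0 (mult x (comp l r Sc la (mult s a))) =
        sc c' (comp l r Sc lam0 (mult (comp l r Sc la (mult s a)) x))"
      using comp_mult_commute[OF lam0_in_Lam la L(1) comp_in_Sc x] by blast
    then show "comp l r Sc lam0 (mult x (comp l r Sc la (mult s a))) = 0"
      using x_null[OF la comp_in_Sc] by simp
  qed
  then show ?thesis by (simp add: c mult_scale_right comp_scale)
qed

lemma linear_comp_mult_comp: "module_hom sc sc (\<lambda>y. comp l r Sc la (mult s (comp l r Sc mu y)))"
  by (simp add: module_hom_def module_hom_axioms_def module_axioms
      comp_add comp_scale mult_add_right mult_scale_right)

lemma radical_mult: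
  assumes x: "x \<in> radical"
  shows "mult a x \<in> radical"
  unfolding radical_def
proof (intro CollectI ballI)
  fix mu nu s assume mu: "mu \<in> Lam l r" and nu: "nu \<in> Lam l r" and s: "s \<in> Sc nu"
  let ?f = "\<lambda>y. comp l r Sc lam0 (mult s (comp l r Sc mu y))"
  have "mult a x = mult (\<Sum>rho\<in>Lam l r. comp l r Sc rho a) (\<Sum>ka\<in>Lam l r. comp l r Sc ka x)"
    by (simp only: sum_comp)
  also have "\<dots> = (\<Sum>ka\<in>Lam l r. \<Sum>rho\<in>Lam l r. mult (comp l r Sc rho a) (comp l r Sc ka x))"
    by (simp only: mult_sum_left mult_sum_right)
  finally have "?f (mult a x) =
      (\<Sum>ka\<in>Lam l r. \<Sum>rho\<in>Lam l r. ?f (mult (comp l r Sc rho a) (comp l r Sc ka x)))"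
    by (simp only: module_hom.sum[OF linear_comp_mult_comp])
  also have "\<dots> = 0"
    using x by (intro sum.neutral ballI homogeneous_radical_mult[OF _ _ mu nu comp_in_Sc comp_in_Sc s])
      (auto simp: radical_def)
  finally show "?f (mult a x) = 0" .
qed

lemma radical_ideal: "fa_ideal l r sc Sc mult radical"
proof -
  have "subspace radical"
    unfolding subspace_def radical_def
    using module_hom.zero[OF linear_comp_mult_comp] module_hom.add[OF linear_comp_mult_comp]
      module_hom.scale[OF linear_comp_mult_comp]
    by simp
  moreover have "comp l r Sc la x \<in> radical" if "x \<in> radical" for la x
    using that by (auto simp: radical_def comp_homogeneous[OF comp_in_Sc] mult_zero_right comp_zero)
  ultimately show ?thesis
    unfolding fa_ideal_def graded_subspace_def using radical_mult by blast
qed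

lemma one_notin_radical: "one \<notin> radical"
proof
  assume "one \<in> radical"
  then have "comp l r Sc lam0 (mult one (comp l r Sc lam0 one)) = 0"
    unfolding radical_def using lam0_in_Lam one_in_Sc by blast
  then show False using comp_homogeneous[OF one_in_Sc] mult_one_left one_neq_0 by simp
qed

lemma radical_eq_0:
  assumes "\<forall>M. fa_ideal l r sc Sc mult M \<longrightarrow> M = {0} \<or> M = UNIV"
  shows "radical = {0}"
  using assms radical_ideal one_notin_radical by blast

lemma exists_pairing_partner:
  assumes radical: "radical = {0}" and la: "la \<in> Lam l r" and a: "a \<in> Sc la" "a \<noteq> 0"
  shows "\<exists>s\<in>Sc la. comp l r Sc lam0 (mult a s) \<noteq> 0"
proof -
  have "a \<notin> radical" using radical a(2) by blast
  then obtain mu nu s where nu: "nu \<in> Lam l r" and s: "s \<in> Sc nu"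
    and "comp l r Sc lam0 (mult s (comp l r Sc mu a)) \<noteq> 0"
    unfolding radical_def by blast
  then have sa_ne: "comp l r Sc lam0 (mult s a) \<noteq> 0"
    by (auto simp: comp_homogeneous[OF a(1)] mult_zero_right comp_zero split: if_splits)
  then have "nu = la"
    using fusion_rule[OF nu la s a(1) lam0_in_Lam] lam0_in_fusL_iff[OF nu la] by blast
  obtain c where "comp l r Sc lam0 (mult s a) = sc c (comp l r Sc lam0 (mult a s))"
    using comp_mult_commute[OF lam0_in_Lam la nu a(1) s] by blast
  then show ?thesis using s sa_ne \<open>nu = la\<close> by auto
qed

lemma Sc_eq_span_single:
  assumes la: "la \<in> Lam l r" and no16: "\<forall>i. la i \<noteq> H16"
    and a: "a \<in> Sc la" and s: "s \<in> Sc la" and as_ne: "comp l r Sc lam0 (mult a s) \<noteq> 0"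
  shows "Sc la = span {a}"
proof
  have in_span_one: "comp l r Sc lam0 y \<in> range (\<lambda>c. sc c one)" for y
    using comp_in_Sc[of lam0 y] by (simp add: Sc_lam0 span_singleton)
  obtain g where g: "comp l r Sc lam0 (mult a s) = sc g one"
    using in_span_one by blast
  with as_ne have "g \<noteq> 0" by auto
  define B where "B = BL l r lam0 lam0 la la la la"
  have "B \<noteq> 0" unfolding B_def by (rule BL_diagonal_nonzero[OF no16])
  show "Sc la \<subseteq> span {a}"
  proof
    fix b assume b: "b \<in> Sc la"
    obtain h where h: "comp l r Sc lam0 (mult b s) = sc h one"
      using in_span_one by blast
    have "sc h a = comp l r Sc la (mult a (comp l r Sc lam0 (mult b s)))"
      by (simp add: h mult_scale_right mult_one_right comp_scale comp_homogeneous[OF a])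
    also have "\<dots> = sc B (comp l r Sc la (mult b (comp l r Sc lam0 (mult a s))))"
      using braiding[OF la la la la b a s, of lam0] AL_diagonal[OF la no16] by (simp add: B_def)
    also have "\<dots> = sc (B * g) b"
      by (simp add: g mult_scale_right mult_one_right comp_scale comp_homogeneous[OF b])
    finally have "sc (inverse (B * g)) (sc h a) = b"
      using \<open>B \<noteq> 0\<close> \<open>g \<noteq> 0\<close> by (simp add: field_simps)
    then show "b \<in> span {a}" by (metis span_scale span_base singletonI)
  qed
  show "span {a} \<subseteq> Sc la"
    using a by (intro span_minimal subspace_Sc) auto
qed

lemma dim_Sc_eq_1:
  assumes radical: "radical = {0}" and la: "la \<in> Lam l r" and no16: "\<forall>i. la i \<noteq> H16"
    and nonzero: "Sc la \<noteq> {0}"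
  shows "dim (Sc la) = 1"
proof -
  obtain a where a: "a \<in> Sc la" "a \<noteq> 0"
    using nonzero subspace_0[OF subspace_Sc] by blast
  then obtain s where "s \<in> Sc la" "comp l r Sc lam0 (mult a s) \<noteq> 0"
    using exists_pairing_partner[OF radical la] by blast
  then have "Sc la = span {a}"
    using Sc_eq_span_single[OF la no16 a(1)] by blast
  then show ?thesis
    using dim_span_eq_card_independent[of "{a}"] a(2) by simp
qed

end

theorem mainTheorem7:
  fixes sc :: "complex \<Rightarrow> 'v::ab_group_add \<Rightarrow> 'v"
    and Sc :: "(nat \<Rightarrow> IS) \<Rightarrow> 'v set"
    and mult :: "'v \<Rightarrow> 'v \<Rightarrow> 'v" and one :: 'v
  assumes "simple_framed_algebra l r sc Sc mult one"
  shows "\<forall>\<alpha>\<in>code_CS l r Sc. vector_space.dim sc (Sc (zero_c \<alpha>)) = 1"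
proof
  have framed: "framed_algebra l r sc Sc mult one"
    and simple: "\<forall>M. fa_ideal l r sc Sc mult M \<longrightarrow> M = {0} \<or> M = UNIV"
    using assms by (simp_all add: simple_framed_algebra_def)
  interpret framed_alg l r sc Sc mult one
    by (rule framed_alg.intro[OF framed])
  fix \<alpha> assume "\<alpha> \<in> code_CS l r Sc"
  then show "dim (Sc (zero_c \<alpha>)) = 1"
    using dim_Sc_eq_1[OF radical_eq_0[OF simple] zero_c_in_Lam] zero_c_neq_H16
    by (simp add: code_CS_def)
qed

end
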